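(* Let $\Gamma$ be a countable discrete abelian group and $(S_n)_{n\ge1}$ a sequence of subgroups of $\Gamma$. A sequence $(\chi_n)_n$ in $\widehat\Gamma$ converges to $\chi\in\widehat\Gamma$ along $(S_n)_n$ if and only if there exist characters $\nu_n\in S_n^\perp$ such that $\chi_n\nu_n\to\chi$ in $\widehat\Gamma$.
   Context: A sequence $(\chi_n)$ in $\widehat\Gamma$ converges to $\chi$ along $(S_n)$ if $\lim_n\mathds{1}_{S_n}(\gamma)|\chi_n(\gamma)-\chi(\gamma)|=0$ for all $\gamma\in\Gamma$. $S^\perp=\{\nu\in\widehat\Gamma:\nu|_S=1\}$; $\widehat\Gamma$ carries the topology of pointwise convergence. *)

theory Defs
  imports "HOL-Analysis.Analysis"
begin

definition is_character :: "('g::ab_group_add \<Rightarrow> complex) \<Rightarrow> bool" where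
  "is_character chi \<longleftrightarrow> (\<forall>a b. chi (a + b) = chi a * chi b) \<and> (\<forall>a. norm (chi a) = 1)"

definition is_subgroup :: "'g::ab_group_add set \<Rightarrow> bool" where
  "is_subgroup S \<longleftrightarrow> 0 \<in> S \<and> (\<forall>a\<in>S. \<forall>b\<in>S. a + b \<in> S) \<and> (\<forall>a\<in>S. - a \<in> S)"

definition annihilator :: "'g::ab_group_add set \<Rightarrow> ('g \<Rightarrow> complex) set" where
  "annihilator S = {\<nu>. is_character \<nu> \<and> (\<forall>s\<in>S. \<nu> s = 1)}"

definition conv_along :: "(nat \<Rightarrow> 'g::ab_group_add set) \<Rightarrow> (nat \<Rightarrow> 'g \<Rightarrow> complex) \<Rightarrow> ('g \<Rightarrow> complex) \<Rightarrow> bool" where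
  "conv_along S chis chi \<longleftrightarrow>
     (\<forall>\<gamma>. (\<lambda>n. indicator (S n) \<gamma> * cmod (chis n \<gamma> - chi \<gamma>)) \<longlonglongrightarrow> (0::real))"

end

theory Submission
  imports Defs "HOL-Real_Asymp.Real_Asymp"
begin

text \<open>Since \<open>\<nu>\<^sub>n = 1\<close> on \<open>S\<^sub>n\<close>, convergence of \<open>\<chi>\<^sub>n\<nu>\<^sub>n\<close> to \<open>\<chi>\<close> forces convergence along \<open>(S\<^sub>n)\<close>.
  Conversely, put \<open>\<eta>\<^sub>n = \<chi> \<chi>\<^sub>n\<^sup>*\<close>; it suffices to find \<open>\<nu> \<in> S\<^sub>n\<^sup>\<bottom>\<close> within \<open>1/(k+1)\<close> of \<open>\<eta>\<^sub>n\<close> at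
  the first \<open>k\<close> points of an enumeration of \<open>\<Gamma>\<close>, for all large \<open>n\<close>, and then to diagonalise
  over \<open>k\<close>. This is an effective form of \<open>(S\<^sup>\<bottom>)\<^sup>\<bottom> = S\<close>. Characters of a subgroup extend to
  \<open>\<Gamma>\<close> (adjoin one element at a time), so \<open>S\<^sup>\<bottom>\<close> separates points off \<open>S\<close>, and products of
  geometric averages of separating characters give finite averages over \<open>S\<^sup>\<bottom>\<close> approximating
  the indicator of \<open>S\<close>. The kernel \<open>|\<Prod>\<^sub>i ((1 + \<nu>(\<gamma>\<^sub>i) t(\<gamma>\<^sub>i)\<^sup>*)/2)\<^sup>s|\<^sup>2\<close> is a positive
  combination of the values of \<open>\<nu> t\<^sup>*\<close> at differences of points of a box; averaging it over
  \<open>\<nu>\<close> picks out the differences in \<open>S\<close>, where \<open>Re t \<ge> 0\<close> for \<open>t = \<eta>\<^sub>n\<close> and \<open>n\<close> large. Hence some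
  \<open>\<nu>\<close> makes the kernel at least half its diagonal weight, whereas the kernel is exponentially
  small in \<open>s\<close> unless every \<open>\<nu>(\<gamma>\<^sub>i)\<close> is close to \<open>t(\<gamma>\<^sub>i)\<close>.\<close>

section \<open>Integer multiples in an abelian group\<close>

definition zsmul :: "int \<Rightarrow> 'g::ab_group_add \<Rightarrow> 'g" where
  "zsmul j x = (if 0 \<le> j then (\<Sum>i<nat j. x) else - (\<Sum>i<nat (- j). x))"

lemma zsmul_0 [simp]: "zsmul 0 x = 0"
  by (simp add: zsmul_def)

lemma zsmul_1 [simp]: "zsmul 1 x = x"
  by (simp add: zsmul_def)

lemma zsmul_plus_1: "zsmul (j + 1) x = zsmul j x + x"
proof -
  consider "0 \<le> j" | "j = -1" | "j < -1" by linarith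
  then show ?thesis
  proof cases
    case 1
    then have "nat (j + 1) = Suc (nat j)" by simp
    with 1 show ?thesis by (simp add: zsmul_def)
  next
    case 3
    then have "nat (- j) = Suc (nat (- (j + 1)))" by simp
    with 3 show ?thesis by (simp add: zsmul_def)
  qed (simp add: zsmul_def)
qed

lemma zsmul_add: "zsmul (i + j) x = zsmul i x + zsmul j x"
proof (induction j rule: int_induct[where k = 0])
  case (step1 j)
  then show ?case by (metis add.assoc zsmul_plus_1)
next
  case (step2 j)
  have "zsmul (i + j) x = zsmul (i + (j - 1)) x + x" "zsmul j x = zsmul (j - 1) x + x"
    using zsmul_plus_1[of "i + (j - 1)" x] zsmul_plus_1[of "j - 1" x] by simp_all
  with step2 show ?case by (simp add: algebra_simps)
qed simp

lemma zsmul_minus: "zsmul (- j) x = - zsmul j x"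
  using zsmul_add[of j "- j" x] by (simp add: eq_neg_iff_add_eq_0 add.commute)

lemma zsmul_diff: "zsmul (i - j) x = zsmul i x - zsmul j x"
  using zsmul_add[of i "- j" x] by (simp add: zsmul_minus)

lemma zsmul_mult: "zsmul (i * j) x = zsmul i (zsmul j x)"
proof (induction i rule: int_induct[where k = 0])
  case (step1 i)
  then show ?case by (simp add: distrib_right zsmul_add zsmul_plus_1)
next
  case (step2 i)
  then show ?case by (simp add: left_diff_distrib zsmul_diff)
qed simp

lemma subgroup_diff: "is_subgroup S \<Longrightarrow> x \<in> S \<Longrightarrow> y \<in> S \<Longrightarrow> x - y \<in> S"
  unfolding is_subgroup_def by (metis diff_conv_add_uminus)

lemma subgroup_zsmul:
  assumes "is_subgroup S" "x \<in> S" shows "zsmul j x \<in> S"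
proof -
  have "(\<Sum>i<n. x) \<in> S" for n :: nat
    using assms by (induction n) (auto simp: is_subgroup_def)
  then show ?thesis
    using assms by (auto simp: zsmul_def is_subgroup_def)
qed

section \<open>Extending characters from subgroups\<close>

definition is_character_on :: "'g::ab_group_add set \<Rightarrow> ('g \<Rightarrow> complex) \<Rightarrow> bool" where
  "is_character_on H psi \<longleftrightarrow>
     (\<forall>a\<in>H. \<forall>b\<in>H. psi (a + b) = psi a * psi b) \<and> (\<forall>a\<in>H. norm (psi a) = 1)"

lemma is_character_on_UNIV: "is_character_on UNIV chi \<longleftrightarrow> is_character chi"
  by (simp add: is_character_on_def is_character_def)

lemma character_on_0:
  assumes "is_subgroup H" "is_character_on H psi" shows "psi 0 = 1"
proof -
  have "psi 0 = psi 0 * psi 0" "norm (psi 0) = 1"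
    using assms by (auto simp: is_character_on_def is_subgroup_def dest: bspec[of _ _ 0])
  then show ?thesis by (metis mult_cancel_right1 norm_zero zero_neq_one)
qed

lemma character_on_zsmul:
  assumes H: "is_subgroup H" and psi: "is_character_on H psi" and x: "x \<in> H"
  shows "psi (zsmul j x) = psi x powi j"
proof (induction j rule: int_induct[where k = 0])
  case base
  show ?case using character_on_0[OF H psi] by simp
next
  case (step1 j)
  have "psi (zsmul (j + 1) x) = psi (zsmul j x) * psi x"
    using psi x subgroup_zsmul[OF H x] by (simp add: zsmul_plus_1 is_character_on_def)
  moreover have "psi x \<noteq> 0" using psi x by (auto simp: is_character_on_def)
  ultimately show ?case using step1 by (simp add: power_int_add)
next
  case (step2 j)
  have "psi (zsmul j x) = psi (zsmul (j - 1) x) * psi x"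
    using psi x subgroup_zsmul[OF H x] zsmul_plus_1[of "j - 1" x]
    by (simp add: is_character_on_def)
  moreover have "psi x \<noteq> 0" using psi x by (auto simp: is_character_on_def)
  ultimately show ?case using step2 by (simp add: power_int_diff field_simps)
qed

definition adjoin :: "'g::ab_group_add set \<Rightarrow> 'g \<Rightarrow> 'g set" where
  "adjoin H g = {h + zsmul j g | h j. h \<in> H}"

lemma subgroup_adjoin:
  assumes H: "is_subgroup H" shows "is_subgroup (adjoin H g)"
  unfolding is_subgroup_def
proof (intro conjI ballI)
  show "0 \<in> adjoin H g"
    using H unfolding adjoin_def is_subgroup_def by (auto intro!: exI[of _ 0])
next
  fix a b assume "a \<in> adjoin H g" "b \<in> adjoin H g"
  then obtain h1 j1 h2 j2 where "a = h1 + zsmul j1 g" "b = h2 + zsmul j2 g" "h1 \<in> H" "h2 \<in> H"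
    unfolding adjoin_def by blast
  then have "a + b = (h1 + h2) + zsmul (j1 + j2) g" "h1 + h2 \<in> H"
    using H by (auto simp: zsmul_add algebra_simps is_subgroup_def)
  then show "a + b \<in> adjoin H g" unfolding adjoin_def by blast
next
  fix a assume "a \<in> adjoin H g"
  then obtain h j where "a = h + zsmul j g" "h \<in> H"
    unfolding adjoin_def by blast
  then have "- a = (- h) + zsmul (- j) g" "- h \<in> H"
    using H by (auto simp: zsmul_minus is_subgroup_def)
  then show "- a \<in> adjoin H g" unfolding adjoin_def by blast
qed

lemma subset_adjoin: "H \<subseteq> adjoin H g"
  unfolding adjoin_def by (force intro: exI[of _ 0])

lemma mem_adjoin: "is_subgroup H \<Longrightarrow> g \<in> adjoin H g"
  unfolding adjoin_def is_subgroup_def by (force intro: exI[of _ 1])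

text \<open>Here \<open>d = 0\<close> when \<open>g\<close> has infinite order modulo \<open>H\<close>.\<close>

lemma multiples_in_subgroup:
  assumes H: "is_subgroup H"
  shows "\<exists>d::nat. \<forall>j. zsmul j g \<in> H \<longleftrightarrow> int d dvd j"
proof (cases "\<forall>j. zsmul j g \<in> H \<longrightarrow> j = 0")
  case True
  then show ?thesis using H by (intro exI[of _ 0]) (auto simp: is_subgroup_def)
next
  case False
  then obtain j where j: "zsmul j g \<in> H" "j \<noteq> 0" by blast
  have "zsmul \<bar>j\<bar> g \<in> H"
    using j H by (cases "j \<ge> 0") (auto simp: zsmul_minus is_subgroup_def)
  then have ex: "\<exists>n::nat. n > 0 \<and> zsmul (int n) g \<in> H"
    using j by (intro exI[of _ "nat \<bar>j\<bar>"]) auto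
  define d where "d = (LEAST n::nat. n > 0 \<and> zsmul (int n) g \<in> H)"
  have d: "d > 0" "zsmul (int d) g \<in> H"
    using LeastI_ex[OF ex] unfolding d_def by auto
  have "zsmul i g \<in> H \<longleftrightarrow> int d dvd i" for i
  proof
    assume i: "zsmul i g \<in> H"
    have "zsmul (i mod int d) g = zsmul i g - zsmul (i div int d) (zsmul (int d) g)"
      using zsmul_diff[of i "i div int d * int d" g] by (simp add: zsmul_mult minus_div_mult_eq_mod)
    then have in_H: "zsmul (i mod int d) g \<in> H"
      using subgroup_diff[OF H i subgroup_zsmul[OF H d(2)]] by simp
    have "nat (i mod int d) = 0"
    proof (rule ccontr)
      assume "nat (i mod int d) \<noteq> 0"
      moreover have "zsmul (int (nat (i mod int d))) g \<in> H" using in_H d(1) by simp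
      ultimately have "d \<le> nat (i mod int d)"
        using Least_le[of "\<lambda>n. n > 0 \<and> zsmul (int n) g \<in> H" "nat (i mod int d)"]
        unfolding d_def[symmetric] by simp
      moreover have "nat (i mod int d) < d" using d(1) by (simp add: nat_less_iff)
      ultimately show False by simp
    qed
    moreover have "0 \<le> i mod int d" using d(1) by simp
    ultimately show "int d dvd i" by (simp add: dvd_eq_mod_eq_0)
  next
    assume "int d dvd i"
    then obtain q where "i = q * int d" by (metis dvd_def mult.commute)
    then show "zsmul i g \<in> H" using subgroup_zsmul[OF H d(2)] by (simp add: zsmul_mult)
  qed
  then show ?thesis by blast
qed

lemma extend_character_on_adjoin:
  assumes H: "is_subgroup H" and psi: "is_character_on H psi" and z: "norm z = 1"
    and compatible: "\<And>j. zsmul j g \<in> H \<Longrightarrow> z powi j = psi (zsmul j g)"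
  shows "\<exists>psi'. is_character_on (adjoin H g) psi' \<and> (\<forall>h\<in>H. psi' h = psi h) \<and> psi' g = z"
proof -
  have "z \<noteq> 0" using z by auto
  have well_defined: "psi h * z powi j = psi h' * z powi j'"
    if "h \<in> H" "h' \<in> H" "h + zsmul j g = h' + zsmul j' g" for h h' j j'
  proof -
    have diff: "zsmul (j - j') g = h' - h"
      using that(3) by (simp add: zsmul_diff algebra_simps)
    then have "zsmul (j - j') g \<in> H" using H that subgroup_diff by metis
    moreover have "h' = h + zsmul (j - j') g" using diff by (simp add: algebra_simps)
    ultimately have "psi h' = psi h * z powi (j - j')"
      using psi that compatible by (simp add: is_character_on_def)
    then show ?thesis using \<open>z \<noteq> 0\<close> by (simp add: power_int_diff)
  qed
  define psi' where
    "psi' y = (SOME v. \<exists>h j. h \<in> H \<and> y = h + zsmul j g \<and> v = psi h * z powi j)" for y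
  have psi': "psi' (h + zsmul j g) = psi h * z powi j" if "h \<in> H" for h j
    unfolding psi'_def
  proof (rule some_equality)
    fix v assume "\<exists>h' j'. h' \<in> H \<and> h + zsmul j g = h' + zsmul j' g \<and> v = psi h' * z powi j'"
    then obtain h' j' where "h' \<in> H" "h + zsmul j g = h' + zsmul j' g" "v = psi h' * z powi j'"
      by blast
    then show "v = psi h * z powi j" using well_defined[OF that] by simp
  qed (use that in blast)
  have "is_character_on (adjoin H g) psi'"
    unfolding is_character_on_def
  proof (intro conjI ballI)
    fix a b assume "a \<in> adjoin H g" "b \<in> adjoin H g"
    then obtain h1 j1 h2 j2 where ab: "a = h1 + zsmul j1 g" "b = h2 + zsmul j2 g" "h1 \<in> H" "h2 \<in> H"
      unfolding adjoin_def by blast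
    have "a + b = (h1 + h2) + zsmul (j1 + j2) g" "h1 + h2 \<in> H"
      using ab H by (auto simp: zsmul_add algebra_simps is_subgroup_def)
    then have "psi' (a + b) = psi (h1 + h2) * z powi (j1 + j2)" using psi' by simp
    also have "\<dots> = (psi h1 * z powi j1) * (psi h2 * z powi j2)"
      using ab psi \<open>z \<noteq> 0\<close> by (simp add: is_character_on_def power_int_add)
    finally show "psi' (a + b) = psi' a * psi' b" using ab psi' by simp
  next
    fix a assume "a \<in> adjoin H g"
    then obtain h j where "a = h + zsmul j g" "h \<in> H" unfolding adjoin_def by blast
    then show "norm (psi' a) = 1"
      using psi' psi z by (simp add: is_character_on_def norm_mult norm_power_int)
  qed
  moreover have "\<forall>h\<in>H. psi' h = psi h" using psi'[of _ 0] by simp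
  moreover have "psi' g = z"
    using psi'[of 0 1] H character_on_0[OF H psi] by (simp add: is_subgroup_def)
  ultimately show ?thesis by blast
qed

lemma exists_compatible_value:
  assumes H: "is_subgroup H" and psi: "is_character_on H psi"
  shows "\<exists>z. norm z = 1 \<and> (\<forall>j. zsmul j g \<in> H \<longrightarrow> z powi j = psi (zsmul j g))"
proof -
  obtain d :: nat where d: "\<And>j. zsmul j g \<in> H \<longleftrightarrow> int d dvd j"
    using multiples_in_subgroup[OF H] by blast
  define w where "w = psi (zsmul (int d) g)"
  have "zsmul (int d) g \<in> H" using d by simp
  then have "norm w = 1" using psi unfolding w_def is_character_on_def by blast
  \<comment> \<open>a \<open>d\<close>-th root of \<open>w\<close>; for \<open>d = 0\<close> division by zero yields \<open>z = 1\<close>\<close>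
  define z where "z = cis (Arg w / real d)"
  have "z ^ d = w"
  proof (cases "d = 0")
    case True
    then show ?thesis using character_on_0[OF H psi] by (simp add: w_def)
  next
    case False
    then have "z ^ d = cis (Arg w)" by (simp add: z_def Complex.DeMoivre)
    also have "\<dots> = w" using \<open>norm w = 1\<close> by (subst cis_Arg) (auto simp: sgn_eq)
    finally show ?thesis .
  qed
  have "z powi j = psi (zsmul j g)" if j: "zsmul j g \<in> H" for j
  proof -
    obtain q where q: "j = int d * q" using d j by (meson dvdE)
    have "z powi j = (z powi int d) powi q" by (simp only: q power_int_mult)
    also have "\<dots> = w powi q" using \<open>z ^ d = w\<close> by simp
    also have "\<dots> = psi (zsmul j g)"
      unfolding w_def q using character_on_zsmul[OF H psi \<open>zsmul (int d) g \<in> H\<close>]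
      by (simp add: zsmul_mult mult.commute)
    finally show ?thesis .
  qed
  moreover have "norm z = 1" by (simp add: z_def)
  ultimately show ?thesis by blast
qed

lemma character_of_chain:
  assumes subgroup: "\<And>n. is_subgroup (K n)"
    and char: "\<And>n. is_character_on (K n) (psi n)"
    and mono: "\<And>n. K n \<subseteq> K (Suc n)"
    and agree: "\<And>n h. h \<in> K n \<Longrightarrow> psi (Suc n) h = psi n h"
    and exhaust: "\<And>x. \<exists>n. x \<in> K n"
  shows "\<exists>chi. is_character chi \<and> (\<forall>n. \<forall>h\<in>K n. chi h = psi n h)"
proof -
  have later: "h \<in> K m \<and> psi m h = psi n h" if h: "h \<in> K n" and "n \<le> m" for h n m
    using \<open>n \<le> m\<close>
  proof (induction m rule: dec_induct)
    case (step m)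
    then show ?case using mono[of m] agree[of h m] by auto
  qed (simp add: h)
  have consistent: "psi m h = psi n h" if "h \<in> K n" "h \<in> K m" for h n m
    using later[OF that(1), of "max n m"] later[OF that(2), of "max n m"] by simp
  define chi where "chi x = psi (SOME n. x \<in> K n) x" for x
  have chi: "chi x = psi n x" if "x \<in> K n" for x n
    unfolding chi_def by (rule someI2_ex[OF exhaust]) (rule consistent[OF that])
  have "is_character chi"
    unfolding is_character_def
  proof (intro conjI allI)
    fix a b
    obtain na nb where "a \<in> K na" "b \<in> K nb" using exhaust by blast
    then have "a \<in> K (max na nb)" "b \<in> K (max na nb)" using later by auto
    moreover have "a + b \<in> K (max na nb)"
      using calculation subgroup by (simp add: is_subgroup_def)
    ultimately show "chi (a + b) = chi a * chi b"
      using char[of "max na nb"] chi by (simp add: is_character_on_def)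
  next
    fix a
    obtain n where "a \<in> K n" using exhaust by blast
    then show "norm (chi a) = 1" using char[of n] chi by (simp add: is_character_on_def)
  qed
  then show ?thesis using chi by blast
qed

lemma extend_character:
  fixes H :: "'g::{ab_group_add, countable} set"
  assumes "is_subgroup H" "is_character_on H psi"
  shows "\<exists>chi. is_character chi \<and> (\<forall>h\<in>H. chi h = psi h)"
proof -
  define P where "P n K \<longleftrightarrow>
    is_subgroup (fst K) \<and> is_character_on (fst K) (snd K) \<and> (n = 0 \<longrightarrow> K = (H, psi))"
    for n :: nat and K :: "'g set \<times> ('g \<Rightarrow> complex)"
  define Q where "Q n K K' \<longleftrightarrow>
    fst K \<subseteq> fst K' \<and> (\<forall>h\<in>fst K. snd K' h = snd K h) \<and> from_nat n \<in> fst K'"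
    for n :: nat and K K' :: "'g set \<times> ('g \<Rightarrow> complex)"
  have "\<exists>K'. P (Suc n) K' \<and> Q n K K'" if "P n K" for n K
  proof -
    have K: "is_subgroup (fst K)" "is_character_on (fst K) (snd K)" using that by (simp_all add: P_def)
    obtain z where "norm z = 1" "\<And>j. zsmul j (from_nat n) \<in> fst K \<Longrightarrow> z powi j = snd K (zsmul j (from_nat n))"
      using exists_compatible_value[OF K] by blast
    from extend_character_on_adjoin[OF K this] obtain psi' where
      "is_character_on (adjoin (fst K) (from_nat n)) psi'" "\<forall>h\<in>fst K. psi' h = snd K h"
      by blast
    then show ?thesis
      using subgroup_adjoin[OF K(1)] subset_adjoin mem_adjoin[OF K(1)]
      by (intro exI[of _ "(adjoin (fst K) (from_nat n), psi')"]) (simp add: P_def Q_def)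
  qed
  moreover have "P 0 (H, psi)" using assms by (simp add: P_def)
  ultimately obtain f where f: "\<And>n. P n (f n) \<and> Q n (f n) (f (Suc n))"
    using dependent_nat_choice[of P Q] by blast
  have "\<exists>chi. is_character chi \<and> (\<forall>n. \<forall>h\<in>fst (f n). chi h = snd (f n) h)"
  proof (rule character_of_chain)
    show "\<exists>n. x \<in> fst (f n)" for x
      using f[of "to_nat x"] by (auto simp: Q_def)
  qed (use f in \<open>auto simp: P_def Q_def\<close>)
  moreover have "f 0 = (H, psi)" using f[of 0] by (simp add: P_def)
  ultimately show ?thesis by (metis fst_conv snd_conv)
qed

lemma exists_root_of_unity_ne_1:
  assumes "d \<noteq> 1" shows "\<exists>z::complex. norm z = 1 \<and> z \<noteq> 1 \<and> z ^ d = 1"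
proof (cases "d = 0")
  case True
  then show ?thesis by (intro exI[of _ "-1"]) simp
next
  case False
  with assms have "d \<ge> 2" by simp
  define z where "z = cis (2 * pi / real d)"
  have "z ^ d = 1" using False by (simp add: z_def Complex.DeMoivre)
  moreover have "z \<noteq> 1"
  proof
    assume "z = 1"
    then have "Re z = 1" by simp
    then have "cos (2 * pi / real d) = 1" by (simp add: z_def)
    then obtain n :: int where n: "2 * pi / real d = of_int n * 2 * pi"
      unfolding cos_one_2pi_int by blast
    have "1 / real d = (2 * pi / real d) / (2 * pi)" by simp
    also have "\<dots> = of_int n" unfolding n by simp
    finally have "1 / real d = of_int n" .
    moreover have "0 < 1 / real d" "1 / real d < 1" using \<open>d \<ge> 2\<close> by simp_all
    ultimately have "0 < n" "n < 1" by simp_all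
    then show False by simp
  qed
  ultimately show ?thesis by (intro exI[of _ z]) (simp add: z_def)
qed

lemma annihilator_separates:
  fixes S :: "'g::{ab_group_add, countable} set"
  assumes S: "is_subgroup S" and g: "g \<notin> S"
  shows "\<exists>mu\<in>annihilator S. mu g \<noteq> 1"
proof -
  obtain d :: nat where d: "\<And>j. zsmul j g \<in> S \<longleftrightarrow> int d dvd j"
    using multiples_in_subgroup[OF S] by blast
  have "d \<noteq> 1" using d[of 1] g by auto
  then obtain z :: complex where z: "norm z = 1" "z \<noteq> 1" "z ^ d = 1"
    using exists_root_of_unity_ne_1 by blast
  have "z powi j = 1" if j: "zsmul j g \<in> S" for j
  proof -
    obtain q where "j = int d * q" using d j by (meson dvdE)
    then show ?thesis using z(3) by (simp add: power_int_mult)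
  qed
  moreover have trivial: "is_character_on S (\<lambda>_. 1)" by (simp add: is_character_on_def)
  ultimately obtain psi where psi: "is_character_on (adjoin S g) psi" "\<forall>h\<in>S. psi h = 1" "psi g = z"
    using extend_character_on_adjoin[OF S trivial z(1), of g] by auto
  obtain chi where "is_character chi" "\<forall>h\<in>adjoin S g. chi h = psi h"
    using extend_character[OF subgroup_adjoin[OF S] psi(1)] by blast
  then show ?thesis
    using psi z(2) subset_adjoin[of S g] mem_adjoin[OF S] unfolding annihilator_def by (intro bexI[of _ chi]) auto
qed

section \<open>Characters of the whole group\<close>

lemma is_subgroup_UNIV: "is_subgroup UNIV"
  by (simp add: is_subgroup_def)

lemma character_0: "is_character chi \<Longrightarrow> chi 0 = 1"
  using character_on_0[OF is_subgroup_UNIV] by (simp add: is_character_on_UNIV)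

lemma norm_character: "is_character chi \<Longrightarrow> norm (chi x) = 1"
  by (simp add: is_character_def)

lemma character_zsmul: "is_character chi \<Longrightarrow> chi (zsmul j x) = chi x powi j"
  using character_on_zsmul[OF is_subgroup_UNIV] by (simp add: is_character_on_UNIV)

lemma mult_cnj_eq_1: "norm (z::complex) = 1 \<Longrightarrow> z * cnj z = 1"
  by (simp add: complex_norm_square[symmetric])

lemma norm_mult_cnj_minus_1:
  assumes "norm w = 1" shows "norm (z * cnj w - 1) = norm (z - w)"
proof -
  have "z * cnj w - 1 = (z - w) * cnj w" using mult_cnj_eq_1[OF assms] by (simp add: algebra_simps)
  then show ?thesis using assms by (simp add: norm_mult)
qed

lemma character_diff:
  assumes "is_character chi" shows "chi (a - b) = chi a * cnj (chi b)"
proof -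
  have "chi (a - b) * chi b = chi a"
    using assms by (metis diff_add_cancel is_character_def)
  then show ?thesis
    using mult_cnj_eq_1[OF norm_character[OF assms]] by (metis mult.assoc mult_1_right)
qed

lemma character_sum: "is_character chi \<Longrightarrow> chi (\<Sum>i\<in>A. f i) = (\<Prod>i\<in>A. chi (f i))"
  by (induction A rule: infinite_finite_induct) (auto simp: character_0 is_character_def)

lemma character_mult: "is_character chi \<Longrightarrow> is_character mu \<Longrightarrow> is_character (\<lambda>x. chi x * mu x)"
  by (simp add: is_character_def norm_mult)

lemma character_cnj: "is_character chi \<Longrightarrow> is_character (\<lambda>x. cnj (chi x))"
  by (simp add: is_character_def)

lemma character_power: "is_character chi \<Longrightarrow> is_character (\<lambda>x. chi x ^ n)"
  by (simp add: is_character_def norm_power power_mult_distrib)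

lemma character_1: "is_character (\<lambda>_. 1)"
  by (simp add: is_character_def)

lemma annihilator_1: "(\<lambda>_. 1) \<in> annihilator S"
  by (simp add: annihilator_def character_1)

lemma annihilator_mult:
  "nu \<in> annihilator S \<Longrightarrow> mu \<in> annihilator S \<Longrightarrow> (\<lambda>x. nu x * mu x) \<in> annihilator S"
  by (simp add: annihilator_def character_mult)

lemma annihilator_power: "mu \<in> annihilator S \<Longrightarrow> (\<lambda>x. mu x ^ n) \<in> annihilator S"
  by (simp add: annihilator_def character_power)

section \<open>Finite averages over the annihilator\<close>

definition average :: "('g \<Rightarrow> complex) list \<Rightarrow> 'g \<Rightarrow> complex" where
  "average L x = (\<Sum>nu\<leftarrow>L. nu x) / of_nat (length L)"

lemma average_product:
  "average [\<lambda>y. nu y * rho y. nu \<leftarrow> L, rho \<leftarrow> R] x = average L x * average R x"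
proof -
  have "(\<Sum>f\<leftarrow>[\<lambda>y. nu y * rho y. nu \<leftarrow> L, rho \<leftarrow> R]. f x) = (\<Sum>nu\<leftarrow>L. nu x) * (\<Sum>rho\<leftarrow>R. rho x)"
    by (induction L) (simp_all add: o_def sum_list_const_mult distrib_right)
  moreover have "length [\<lambda>y. nu y * rho y. nu \<leftarrow> L, rho \<leftarrow> R] = length L * length R"
    by (induction L) simp_all
  ultimately show ?thesis by (simp add: average_def)
qed

lemma average_in_annihilator:
  assumes "L \<noteq> []" "set L \<subseteq> annihilator S" "x \<in> S"
  shows "average L x = 1"
proof -
  have "(\<Sum>nu\<leftarrow>L. nu x) = (\<Sum>nu\<leftarrow>L. 1)"
    using assms(2,3) by (intro arg_cong[of _ _ sum_list] map_cong) (auto simp: annihilator_def)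
  then show ?thesis using assms(1) by (simp add: average_def sum_list_triv)
qed

lemma norm_average_characters:
  assumes "\<forall>nu\<in>set L. is_character nu" shows "norm (average L x) \<le> 1"
proof -
  have "norm (\<Sum>nu\<leftarrow>L. nu x) \<le> length L"
    using assms by (induction L) (auto intro: order_trans[OF norm_triangle_ineq] simp: norm_character)
  then show ?thesis by (simp add: average_def norm_divide divide_le_eq_1)
qed

lemma average_powers: "average (map (\<lambda>a y. mu y ^ a) [0..<N]) x = (\<Sum>a<N. mu x ^ a) / of_nat N"
  by (simp add: average_def o_def atLeast0LessThan sum_set_upt_conv_sum_list_nat[symmetric])

lemma norm_geometric_sum_le:
  fixes w :: complex
  assumes "norm w = 1" "w \<noteq> 1"
  shows "norm (\<Sum>a<N. w ^ a) \<le> 2 / norm (1 - w)"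
proof -
  have "norm (w ^ N - 1) \<le> 2"
    using norm_triangle_ineq4[of "w ^ N" 1] assms(1) by (simp add: norm_power)
  moreover have "(\<Sum>a<N. w ^ a) = (w ^ N - 1) / (w - 1)" using assms(2) by (simp add: geometric_sum)
  ultimately show ?thesis
    using assms(2) by (simp add: norm_divide norm_minus_commute divide_right_mono)
qed

lemma annihilator_average_small_at:
  fixes S :: "'g::{ab_group_add, countable} set"
  assumes S: "is_subgroup S" and g: "g \<notin> S" and tau: "tau > 0"
  shows "\<exists>R. R \<noteq> [] \<and> set R \<subseteq> annihilator S \<and> norm (average R g) \<le> tau"
proof -
  obtain mu where mu: "mu \<in> annihilator S" "mu g \<noteq> 1"
    using annihilator_separates[OF S g] by blast
  have "norm (mu g) = 1" using mu(1) by (simp add: annihilator_def norm_character)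
  define N where "N = nat \<lceil>2 / (tau * norm (1 - mu g))\<rceil> + 1"
  define R where "R = map (\<lambda>a y. mu y ^ a) [0..<N]"
  have "N > 0" by (simp add: N_def)
  have "2 / (tau * norm (1 - mu g)) \<le> real N" unfolding N_def by linarith
  then have N_large: "2 / norm (1 - mu g) / real N \<le> tau"
    using tau mu(2) \<open>N > 0\<close> by (simp add: field_simps)
  have "norm (average R g) = norm (\<Sum>a<N. mu g ^ a) / real N"
    unfolding R_def average_powers by (simp add: norm_divide)
  also have "\<dots> \<le> 2 / norm (1 - mu g) / real N"
    by (rule divide_right_mono[OF norm_geometric_sum_le[OF \<open>norm (mu g) = 1\<close> mu(2)]]) simp
  finally have "norm (average R g) \<le> tau" using N_large by linarith
  moreover have "R \<noteq> []" "set R \<subseteq> annihilator S"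
    using \<open>N > 0\<close> annihilator_power[OF mu(1)] by (auto simp: R_def)
  ultimately show ?thesis by blast
qed

text \<open>A finitary substitute for integrating against the Haar measure of the compact group
  \<open>S\<^sup>\<bottom>\<close>.\<close>

lemma annihilator_average_approximates_indicator:
  fixes S :: "'g::{ab_group_add, countable} set"
  assumes S: "is_subgroup S" and "finite X" and tau: "tau > 0"
  shows "\<exists>L. L \<noteq> [] \<and> set L \<subseteq> annihilator S \<and> (\<forall>x\<in>X. norm (average L x - indicator S x) \<le> tau)"
  using \<open>finite X\<close>
proof (induction X rule: finite_induct)
  case empty
  show ?case using annihilator_1 by (intro exI[of _ "[\<lambda>_. 1]"]) auto
next
  case (insert g X)
  then obtain L where L: "L \<noteq> []" "set L \<subseteq> annihilator S"
    "\<And>x. x \<in> X \<Longrightarrow> norm (average L x - indicator S x) \<le> tau"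
    by blast
  show ?case
  proof (cases "g \<in> S")
    case True
    then show ?thesis using L average_in_annihilator[OF L(1,2) True] tau by (intro exI[of _ L]) auto
  next
    case False
    obtain R where R: "R \<noteq> []" "set R \<subseteq> annihilator S" and R_g: "norm (average R g) \<le> tau"
      using annihilator_average_small_at[OF S False tau] by blast
    have R_norm: "norm (average R x) \<le> 1" for x
      using R(2) by (intro norm_average_characters) (auto simp: annihilator_def)
    \<comment> \<open>the product family keeps the values on \<open>S\<close> and is small wherever \<open>L\<close> or \<open>R\<close> is\<close>
    define L' where "L' = [\<lambda>y. nu y * rho y. nu \<leftarrow> L, rho \<leftarrow> R]"
    have "L' \<noteq> []" using L(1) R(1) by (cases L; cases R) (simp_all add: L'_def)
    moreover have "set L' \<subseteq> annihilator S"
      using L(2) R(2) by (auto simp: L'_def intro!: annihilator_mult)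
    moreover have "norm (average L' x - indicator S x) \<le> tau" if "x \<in> insert g X" for x
    proof (cases "x \<in> S")
      case True
      with that False have "x \<in> X" by auto
      then show ?thesis
        using L(3)[of x] True average_in_annihilator[OF R True] by (simp add: L'_def average_product)
    next
      case x: False
      have "norm (average L x) \<le> tau" if "x \<in> X" using L(3)[OF that] x by simp
      moreover have "norm (average L x) \<le> 1"
        using L(2) by (intro norm_average_characters) (auto simp: annihilator_def)
      ultimately show ?thesis
        using that x R_norm[of x] R_g tau
        by (auto simp: L'_def average_product norm_mult intro: mult_mono' order_trans[OF mult_mono'])
    qed
    ultimately show ?thesis by blast
  qed
qed

lemma exists_ge_average:
  fixes f :: "'a \<Rightarrow> real"
  assumes "L \<noteq> []" shows "\<exists>nu\<in>set L. (\<Sum>mu\<leftarrow>L. f mu) / length L \<le> f nu"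
proof (rule ccontr)
  assume "\<not> ?thesis"
  then have "(\<Sum>mu\<leftarrow>L. f mu) < (\<Sum>mu\<leftarrow>L. (\<Sum>mu\<leftarrow>L. f mu) / length L)"
    using assms by (intro sum_list_strict_mono) auto
  then show False using assms by (simp add: sum_list_triv)
qed

lemma sum_mult_average:
  "(\<Sum>p\<in>I. c p * average L (x p)) = (\<Sum>nu\<leftarrow>L. \<Sum>p\<in>I. c p * nu (x p)) / of_nat (length L)"
proof -
  have "(\<Sum>p\<in>I. c p * (\<Sum>nu\<leftarrow>L. nu (x p))) = (\<Sum>nu\<leftarrow>L. \<Sum>p\<in>I. c p * nu (x p))"
    by (induction L) (simp_all add: distrib_left sum.distrib)
  then show ?thesis by (simp add: average_def sum_divide_distrib[symmetric] mult.assoc)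
qed

lemma Re_sum_list: "Re (\<Sum>z\<leftarrow>L. f z) = (\<Sum>z\<leftarrow>L. Re (f z))"
  by (induction L) simp_all

text \<open>The best member of an averaging family does at least as well as the average.\<close>

lemma annihilator_correlation_lower_bound:
  fixes S :: "'g::{ab_group_add, countable} set"
  assumes S: "is_subgroup S" and "finite I" and tau: "tau > 0"
  shows "\<exists>nu\<in>annihilator S. Re (\<Sum>p\<in>I. c p * indicator S (x p)) - tau * (\<Sum>p\<in>I. norm (c p))
           \<le> Re (\<Sum>p\<in>I. c p * nu (x p))"
proof -
  obtain L where L: "L \<noteq> []" "set L \<subseteq> annihilator S"
    "\<forall>y\<in>x ` I. norm (average L y - indicator S y) \<le> tau"
    using annihilator_average_approximates_indicator[OF S finite_imageI[OF \<open>finite I\<close>, of x] tau]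
    by blast
  define E where "E = (\<Sum>p\<in>I. c p * (average L (x p) - indicator S (x p)))"
  have "norm E \<le> tau * (\<Sum>p\<in>I. norm (c p))"
    unfolding E_def sum_distrib_left
  proof (rule order_trans[OF norm_sum sum_mono])
    fix p assume "p \<in> I"
    then have "norm (average L (x p) - indicator S (x p)) \<le> tau" by (simp add: L(3))
    then show "norm (c p * (average L (x p) - indicator S (x p))) \<le> tau * norm (c p)"
      by (simp add: norm_mult mult.commute[of tau] mult_left_mono)
  qed
  then have "- (tau * (\<Sum>p\<in>I. norm (c p))) \<le> Re E"
    using abs_Re_le_cmod[of E] by linarith
  moreover have "(\<Sum>p\<in>I. c p * average L (x p)) = (\<Sum>p\<in>I. c p * indicator S (x p)) + E"
    unfolding E_def by (simp add: right_diff_distrib sum_subtractf)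
  ultimately have "Re (\<Sum>p\<in>I. c p * indicator S (x p)) - tau * (\<Sum>p\<in>I. norm (c p))
      \<le> Re (\<Sum>p\<in>I. c p * average L (x p))"
    by simp
  also have "\<dots> = (\<Sum>nu\<leftarrow>L. Re (\<Sum>p\<in>I. c p * nu (x p))) / length L"
    by (simp add: sum_mult_average Re_sum_list Re_divide_of_nat)
  finally show ?thesis
    using exists_ge_average[OF L(1), of "\<lambda>nu. Re (\<Sum>p\<in>I. c p * nu (x p))"] L(2)
    by (meson order_trans subsetD)
qed

section \<open>A positive definite kernel\<close>

definition box_point :: "(nat \<Rightarrow> 'g::ab_group_add) \<Rightarrow> nat \<Rightarrow> (nat \<Rightarrow> nat) \<Rightarrow> 'g" where
  "box_point gam k m = (\<Sum>i<k. zsmul (int (m i)) (gam i))"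

definition binomial_weight :: "nat \<Rightarrow> nat \<Rightarrow> (nat \<Rightarrow> nat) \<Rightarrow> real" where
  "binomial_weight k s m = (\<Prod>i<k. real (s choose m i) / 2 ^ s)"

lemma binomial_weight_nonneg: "0 \<le> binomial_weight k s m"
  by (simp add: binomial_weight_def prod_nonneg)

lemma kernel_expansion:
  assumes xi: "is_character xi"
  shows "(\<Prod>i<k. ((1 + xi (gam i)) / 2) ^ s) =
    (\<Sum>m\<in>PiE {..<k} (\<lambda>_. {..s}). of_real (binomial_weight k s m) * xi (box_point gam k m))"
proof -
  have binomial: "((1 + w) / 2) ^ s = (\<Sum>j\<le>s. of_real (real (s choose j) / 2 ^ s) * w ^ j)"
    for w :: complex
  proof -
    have "(w + 1) ^ s = (\<Sum>j\<le>s. of_nat (s choose j) * w ^ j)" by (simp add: binomial_ring)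
    then show ?thesis by (simp add: power_divide add.commute sum_divide_distrib)
  qed
  have "(\<Prod>i<k. ((1 + xi (gam i)) / 2) ^ s) =
      (\<Sum>m\<in>PiE {..<k} (\<lambda>_. {..s}). \<Prod>i<k. of_real (real (s choose m i) / 2 ^ s) * xi (gam i) ^ m i)"
    unfolding binomial by (rule prod_sum_PiE) auto
  also have "\<dots> = (\<Sum>m\<in>PiE {..<k} (\<lambda>_. {..s}). of_real (binomial_weight k s m) * xi (box_point gam k m))"
  proof (rule sum.cong[OF refl])
    fix m
    have "xi (box_point gam k m) = (\<Prod>i<k. xi (gam i) ^ m i)"
      by (simp add: box_point_def character_sum[OF xi] character_zsmul[OF xi])
    then show "(\<Prod>i<k. of_real (real (s choose m i) / 2 ^ s) * xi (gam i) ^ m i) =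
        of_real (binomial_weight k s m) * xi (box_point gam k m)"
      by (simp only: prod.distrib binomial_weight_def of_real_prod)
  qed
  finally show ?thesis .
qed

lemma binomial_weight_sum: "(\<Sum>m\<in>PiE {..<k} (\<lambda>_. {..s}). binomial_weight k s m) = 1"
  using kernel_expansion[OF character_1, where k = k and s = s] by (simp flip: of_real_sum)

lemma kernel_norm_square_expansion:
  fixes k s :: nat
  assumes xi: "is_character xi"
  defines "M \<equiv> PiE {..<k} (\<lambda>_. {..s})"
  shows "complex_of_real (norm (\<Prod>i<k. ((1 + xi (gam i)) / 2) ^ s) ^ 2) =
    (\<Sum>p\<in>M \<times> M. of_real (binomial_weight k s (fst p) * binomial_weight k s (snd p))
        * xi (box_point gam k (fst p) - box_point gam k (snd p)))"
proof -
  let ?Q = "\<Prod>i<k. ((1 + xi (gam i)) / 2) ^ s"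
  have "complex_of_real (norm ?Q ^ 2) = ?Q * cnj ?Q" by (rule complex_norm_square)
  also have "\<dots> = (\<Sum>m\<in>M. of_real (binomial_weight k s m) * xi (box_point gam k m)) *
      (\<Sum>m\<in>M. of_real (binomial_weight k s m) * cnj (xi (box_point gam k m)))"
    unfolding kernel_expansion[OF xi] M_def by (simp add: cnj_sum)
  also have "\<dots> = (\<Sum>p\<in>M \<times> M. of_real (binomial_weight k s (fst p) * binomial_weight k s (snd p))
        * xi (box_point gam k (fst p) - box_point gam k (snd p)))"
    by (simp add: sum_product sum.cartesian_product case_prod_beta character_diff[OF xi] mult_ac)
  finally show ?thesis .
qed

lemma norm_half_one_plus:
  fixes z :: complex
  assumes "norm z = 1"
  shows "norm ((1 + z) / 2) ^ 2 = 1 - norm (1 - z) ^ 2 / 4"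
proof -
  have "Re z ^ 2 + Im z ^ 2 = 1" using assms cmod_power2[of z] by simp
  then have "((1 + Re z) ^ 2 + Im z ^ 2) / 4 = 1 - ((1 - Re z) ^ 2 + Im z ^ 2) / 4"
    by (simp add: power2_sum power2_diff field_simps)
  then show ?thesis by (simp add: norm_divide power_divide cmod_power2)
qed

lemma kernel_small_if_far:
  fixes gam :: "nat \<Rightarrow> 'g::ab_group_add" and k :: nat
  assumes xi: "is_character xi" and "i < k" and "0 \<le> eps" "eps \<le> norm (1 - xi (gam i))"
  shows "norm (\<Prod>j<k. ((1 + xi (gam j)) / 2) ^ s) ^ 2 \<le> (1 - eps ^ 2 / 4) ^ s"
proof -
  have factor_le_1: "norm ((1 + xi (gam j)) / 2) \<le> 1" for j
    using norm_triangle_ineq[of 1 "xi (gam j)"] norm_character[OF xi] by (simp add: norm_divide)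
  have "norm (\<Prod>j<k. ((1 + xi (gam j)) / 2) ^ s) = (\<Prod>j<k. norm ((1 + xi (gam j)) / 2) ^ s)"
    by (simp add: norm_power del: norm_divide flip: prod_norm)
  also have "\<dots> = norm ((1 + xi (gam i)) / 2) ^ s * (\<Prod>j\<in>{..<k} - {i}. norm ((1 + xi (gam j)) / 2) ^ s)"
    using \<open>i < k\<close> by (simp add: prod.remove)
  also have "\<dots> \<le> norm ((1 + xi (gam i)) / 2) ^ s"
    using power_le_one[OF norm_ge_zero factor_le_1] by (intro mult_left_le prod_le_1) auto
  finally have "norm (\<Prod>j<k. ((1 + xi (gam j)) / 2) ^ s) ^ 2 \<le> (norm ((1 + xi (gam i)) / 2) ^ s) ^ 2"
    by (intro power_mono) simp_all
  also have "\<dots> = (norm ((1 + xi (gam i)) / 2) ^ 2) ^ s"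
    by (simp only: power_mult[symmetric] mult.commute)
  also have "\<dots> = (1 - norm (1 - xi (gam i)) ^ 2 / 4) ^ s"
    using norm_half_one_plus[OF norm_character[OF xi]] by simp
  also have "\<dots> \<le> (1 - eps ^ 2 / 4) ^ s"
  proof (rule power_mono)
    show "0 \<le> 1 - norm (1 - xi (gam i)) ^ 2 / 4"
      using norm_half_one_plus[OF norm_character[OF xi], of "gam i"] by (metis zero_le_power2)
    show "1 - norm (1 - xi (gam i)) ^ 2 / 4 \<le> 1 - eps ^ 2 / 4"
      using assms(3,4) by (simp add: power_mono)
  qed
  finally show ?thesis .
qed

lemma sum_square_binomial_weight:
  "1 \<le> (\<Sum>m\<in>PiE {..<k} (\<lambda>_. {..s}). binomial_weight k s m ^ 2) * real (Suc s) ^ k"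
proof -
  have "(\<Sum>m\<in>PiE {..<k} (\<lambda>_. {..s}). binomial_weight k s m) ^ 2
      \<le> (\<Sum>m\<in>PiE {..<k} (\<lambda>_. {..s}). binomial_weight k s m ^ 2) * card (PiE {..<k} (\<lambda>_. {..s}))"
    by (rule sum_squared_le_sum_of_squares)
  then show ?thesis by (simp add: binomial_weight_sum card_PiE)
qed

lemma sum_square_le_correlation:
  fixes f :: "'m \<Rightarrow> 'g::ab_group_add" and w :: "'m \<Rightarrow> real"
  assumes "finite M" and S: "is_subgroup S" and t: "is_character t" and w: "\<And>m. 0 \<le> w m"
    and nonneg: "\<And>m m'. m \<in> M \<Longrightarrow> m' \<in> M \<Longrightarrow> f m - f m' \<in> S \<Longrightarrow> 0 \<le> Re (t (f m - f m'))"
  shows "(\<Sum>m\<in>M. w m ^ 2) \<le> Re (\<Sum>p\<in>M \<times> M. complex_of_real (w (fst p) * w (snd p))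
           * cnj (t (f (fst p) - f (snd p))) * indicator S (f (fst p) - f (snd p)))"
proof -
  define corr where "corr p = w (fst p) * w (snd p) * Re (t (f (fst p) - f (snd p)))
    * indicator S (f (fst p) - f (snd p))" for p
  have "0 \<in> S" using S by (simp add: is_subgroup_def)
  then have "(\<Sum>m\<in>M. w m ^ 2) = (\<Sum>m\<in>M. corr (m, m))"
    by (simp add: corr_def character_0[OF t] power2_eq_square)
  also have "\<dots> = (\<Sum>p\<in>(\<lambda>m. (m, m)) ` M. corr p)"
    by (simp add: sum.reindex inj_on_def)
  also have "\<dots> \<le> (\<Sum>p\<in>M \<times> M. corr p)"
  proof (rule sum_mono2)
    show "0 \<le> corr p" if "p \<in> M \<times> M - (\<lambda>m. (m, m)) ` M" for p
      using that nonneg[of "fst p" "snd p"] w by (auto simp: corr_def indicator_def)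
  qed (use \<open>finite M\<close> in auto)
  also have "\<dots> = Re (\<Sum>p\<in>M \<times> M. complex_of_real (w (fst p) * w (snd p))
      * cnj (t (f (fst p) - f (snd p))) * indicator S (f (fst p) - f (snd p)))"
    unfolding Re_sum by (intro sum.cong refl) (simp add: corr_def indicator_def)
  finally show ?thesis .
qed

text \<open>By the hypothesis, the weights of the expanded kernel correlate with the indicator of \<open>S\<close>
  at least as much as the diagonal weight \<open>\<Sum> w\<^sup>2\<close>.\<close>

lemma exists_annihilator_large_kernel:
  fixes S :: "'g::{ab_group_add, countable} set" and gam :: "nat \<Rightarrow> 'g" and k s :: nat
  defines "M \<equiv> PiE {..<k} (\<lambda>_. {..s})"
  assumes S: "is_subgroup S" and t: "is_character t"
    and nonneg: "\<And>m m'. m \<in> M \<Longrightarrow> m' \<in> M \<Longrightarrow> box_point gam k m - box_point gam k m' \<in> S \<Longrightarrow>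
        0 \<le> Re (t (box_point gam k m - box_point gam k m'))"
  shows "\<exists>nu\<in>annihilator S. (\<Sum>m\<in>M. binomial_weight k s m ^ 2) / 2
           \<le> norm (\<Prod>i<k. ((1 + nu (gam i) * cnj (t (gam i))) / 2) ^ s) ^ 2"
proof -
  define w where "w = binomial_weight k s"
  define x where "x p = box_point gam k (fst p) - box_point gam k (snd p)" for p :: "(nat \<Rightarrow> nat) \<times> (nat \<Rightarrow> nat)"
  define c where "c p = complex_of_real (w (fst p) * w (snd p)) * cnj (t (x p))" for p
  define c0 where "c0 = (\<Sum>m\<in>M. w m ^ 2)"
  have "finite M" by (simp add: M_def finite_PiE)
  have "c0 > 0"
    using sum_square_binomial_weight[of k s] unfolding c0_def w_def M_def
    by (metis mult_eq_0_iff not_one_le_zero order_le_less sum_nonneg zero_le_power2)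
  have diagonal: "c0 \<le> Re (\<Sum>p\<in>M \<times> M. c p * indicator S (x p))"
    unfolding c0_def c_def x_def
    by (rule sum_square_le_correlation[OF \<open>finite M\<close> S t _ nonneg]) (simp add: w_def binomial_weight_nonneg)
  have "(\<Sum>p\<in>M \<times> M. norm (c p)) = (\<Sum>p\<in>M \<times> M. w (fst p) * w (snd p))"
    by (simp add: c_def norm_mult norm_character[OF t] abs_mult w_def binomial_weight_nonneg)
  also have "\<dots> = (\<Sum>m\<in>M. w m) * (\<Sum>m\<in>M. w m)"
    by (simp add: sum_product sum.cartesian_product case_prod_beta)
  also have "\<dots> = 1" by (simp add: w_def M_def binomial_weight_sum)
  finally have total: "(\<Sum>p\<in>M \<times> M. norm (c p)) = 1" .
  obtain nu where nu: "nu \<in> annihilator S"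
    "Re (\<Sum>p\<in>M \<times> M. c p * indicator S (x p)) - c0 / 2 * (\<Sum>p\<in>M \<times> M. norm (c p))
       \<le> Re (\<Sum>p\<in>M \<times> M. c p * nu (x p))"
    using annihilator_correlation_lower_bound[OF S _ half_gt_zero[OF \<open>c0 > 0\<close>], of "M \<times> M" c x]
      \<open>finite M\<close> by blast
  have "is_character (\<lambda>y. nu y * cnj (t y))"
    using nu(1) t by (simp add: annihilator_def character_mult character_cnj)
  from kernel_norm_square_expansion[OF this, where k = k and s = s and gam = gam]
  have "(\<Sum>p\<in>M \<times> M. c p * nu (x p))
      = of_real (norm (\<Prod>i<k. ((1 + nu (gam i) * cnj (t (gam i))) / 2) ^ s) ^ 2)"
    by (simp add: M_def c_def x_def w_def mult_ac)
  then show ?thesis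
    using diagonal total nu unfolding c0_def w_def by (intro bexI[OF _ nu(1)]) simp
qed

lemma annihilator_approximates_character:
  fixes S :: "'g::{ab_group_add, countable} set" and gam :: "nat \<Rightarrow> 'g"
  assumes S: "is_subgroup S" and t: "is_character t" and "0 \<le> eps"
    and s: "real (Suc s) ^ k * (1 - eps ^ 2 / 4) ^ s < 1 / 2"
    and nonneg: "\<And>m m'. m \<in> PiE {..<k} (\<lambda>_. {..s}) \<Longrightarrow> m' \<in> PiE {..<k} (\<lambda>_. {..s}) \<Longrightarrow>
        box_point gam k m - box_point gam k m' \<in> S \<Longrightarrow>
        0 \<le> Re (t (box_point gam k m - box_point gam k m'))"
  shows "\<exists>nu\<in>annihilator S. \<forall>i<k. norm (nu (gam i) - t (gam i)) < eps"
proof -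
  define c0 where "c0 = (\<Sum>m\<in>PiE {..<k} (\<lambda>_. {..s}). binomial_weight k s m ^ 2)"
  obtain nu where nu: "nu \<in> annihilator S"
    "c0 / 2 \<le> norm (\<Prod>i<k. ((1 + nu (gam i) * cnj (t (gam i))) / 2) ^ s) ^ 2"
    using exists_annihilator_large_kernel[OF S t nonneg] unfolding c0_def by blast
  define xi where "xi = (\<lambda>y. nu y * cnj (t y))"
  have xi: "is_character xi"
    using nu(1) t by (simp add: xi_def annihilator_def character_mult character_cnj)
  have "norm (nu (gam i) - t (gam i)) < eps" if "i < k" for i
  proof (rule ccontr)
    assume "\<not> ?thesis"
    then have "eps \<le> norm (1 - xi (gam i))"
      using norm_mult_cnj_minus_1[OF norm_character[OF t], of "nu (gam i)" "gam i"]
      by (simp add: xi_def norm_minus_commute)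
    from kernel_small_if_far[where gam = gam and s = s, OF xi \<open>i < k\<close> \<open>0 \<le> eps\<close> this]
    have "c0 / 2 \<le> (1 - eps ^ 2 / 4) ^ s" using nu(2) by (simp add: xi_def)
    then have "c0 * real (Suc s) ^ k / 2 \<le> real (Suc s) ^ k * (1 - eps ^ 2 / 4) ^ s"
      by (simp add: mult_right_mono mult.commute)
    then show False
      using s sum_square_binomial_weight[of k s] unfolding c0_def by linarith
  qed
  then show ?thesis using nu(1) by blast
qed

section \<open>Convergence along a sequence of subgroups\<close>

lemma eventually_power_small:
  assumes "0 < q" "q < 1" shows "\<exists>s. real (Suc s) ^ k * q ^ s < 1 / 2"
proof -
  have "(\<lambda>s. real (Suc s) ^ k * q ^ s) \<longlonglongrightarrow> 0" using assms by real_asymp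
  then have "\<forall>\<^sub>F s in sequentially. real (Suc s) ^ k * q ^ s < 1 / 2"
    by (rule order_tendstoD) simp
  then show ?thesis by (meson eventually_sequentially order_refl)
qed

lemma eventually_annihilator_approximates:
  fixes S :: "nat \<Rightarrow> 'g::{ab_group_add, countable} set" and gam :: "nat \<Rightarrow> 'g"
  assumes S: "\<And>n. is_subgroup (S n)" and eta: "\<And>n. is_character (eta n)"
    and along: "\<And>y. (\<lambda>n. indicator (S n) y * norm (eta n y - 1)) \<longlonglongrightarrow> (0::real)"
  shows "\<forall>\<^sub>F n in sequentially. \<exists>nu\<in>annihilator (S n).
           \<forall>i<k. norm (nu (gam i) - eta n (gam i)) < 1 / real (Suc k)"
proof -
  define eps where "eps = 1 / real (Suc k)"
  have eps: "0 < eps" "eps \<le> 1" by (simp_all add: eps_def)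
  then have "eps ^ 2 \<le> 1" by (simp add: power_le_one)
  then obtain s where s: "real (Suc s) ^ k * (1 - eps ^ 2 / 4) ^ s < 1 / 2"
    using eventually_power_small[of "1 - eps ^ 2 / 4"] eps by auto
  define M where "M = PiE {..<k} (\<lambda>_::nat. {..s})"
  define X where "X = (\<lambda>p. box_point gam k (fst p) - box_point gam k (snd p)) ` (M \<times> M)"
  have "finite X" by (simp add: X_def M_def finite_PiE)
  have "\<forall>y\<in>X. \<forall>\<^sub>F n in sequentially. indicator (S n) y * norm (eta n y - 1) < 1"
    by (intro ballI order_tendstoD(2)[OF along]) simp
  then have "\<forall>\<^sub>F n in sequentially. \<forall>y\<in>X. indicator (S n) y * norm (eta n y - 1) < 1"
    by (rule eventually_ball_finite[OF \<open>finite X\<close>])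
  then show ?thesis
  proof (rule eventually_mono)
    fix n assume close: "\<forall>y\<in>X. indicator (S n) y * norm (eta n y - 1) < (1::real)"
    have "0 \<le> Re (eta n y)" if "y \<in> X" "y \<in> S n" for y
    proof -
      have "norm (eta n y - 1) < 1" using bspec[OF close that(1)] that(2) by simp
      then show ?thesis using abs_Re_le_cmod[of "eta n y - 1"] by simp
    qed
    moreover have "box_point gam k m - box_point gam k m' \<in> X" if "m \<in> M" "m' \<in> M" for m m'
      unfolding X_def using that by (intro image_eqI[where x = "(m, m')"]) auto
    ultimately have "\<exists>nu\<in>annihilator (S n). \<forall>i<k. norm (nu (gam i) - eta n (gam i)) < eps"
      by (intro annihilator_approximates_character[OF S eta less_imp_le[OF eps(1)] s])
        (simp add: M_def)
    then show "\<exists>nu\<in>annihilator (S n). \<forall>i<k. norm (nu (gam i) - eta n (gam i)) < 1 / real (Suc k)"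
      by (simp add: eps_def)
  qed
qed

lemma diagonal_selection:
  fixes err :: "nat \<Rightarrow> 'a \<Rightarrow> nat \<Rightarrow> real"
  assumes ev: "\<And>k. \<forall>\<^sub>F n in sequentially. \<exists>a\<in>A n. \<forall>i<k. err n a i < 1 / real (Suc k)"
    and nonempty: "\<And>n. A n \<noteq> {}"
  shows "\<exists>a. (\<forall>n. a n \<in> A n) \<and> (\<forall>i r. 0 < r \<longrightarrow> (\<forall>\<^sub>F n in sequentially. err n (a n) i < r))"
proof -
  define P where "P k n \<longleftrightarrow> (\<exists>a\<in>A n. \<forall>i<k. err n a i < 1 / real (Suc k))" for k n
  \<comment> \<open>the best precision already available at time \<open>n\<close>\<close>
  define K where "K n = (GREATEST k. k \<le> n \<and> P k n)" for n
  have P0: "P 0 n" for n using nonempty by (simp add: P_def ex_in_conv)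
  have "K n \<le> n \<and> P (K n) n" for n
    unfolding K_def by (rule GreatestI_nat[of _ 0 n]) (use P0 in auto)
  then have K: "P (K n) n" for n by blast
  have K_ge: "k \<le> K n" if "k \<le> n" "P k n" for k n
    unfolding K_def by (rule Greatest_le_nat[of _ k n]) (use that in auto)
  have "\<forall>n. \<exists>a. a \<in> A n \<and> (\<forall>i<K n. err n a i < 1 / real (Suc (K n)))"
    using K unfolding P_def by blast
  from this[unfolded choice_iff] obtain a where
    a: "\<And>n. a n \<in> A n" "\<And>n i. i < K n \<Longrightarrow> err n (a n) i < 1 / real (Suc (K n))"
    by blast
  have "\<forall>\<^sub>F n in sequentially. err n (a n) i < r" if "0 < r" for i r
  proof -
    obtain k0 :: nat where "1 / r < real k0" using reals_Archimedean2 by blast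
    define k where "k = max k0 (Suc i)"
    have "i < k" by (simp add: k_def)
    have "1 / r < real (Suc k)" using \<open>1 / r < real k0\<close> by (simp add: k_def)
    then have "1 / real (Suc k) < r" using \<open>0 < r\<close> by (simp add: field_simps)
    have "\<forall>\<^sub>F n in sequentially. k \<le> K n"
      using eventually_conj[OF ev[of k, folded P_def] eventually_ge_at_top[of k]]
      by (rule eventually_mono) (simp add: K_ge)
    then show ?thesis
    proof (rule eventually_mono)
      fix n assume "k \<le> K n"
      then have "err n (a n) i < 1 / real (Suc (K n))" using a(2) \<open>i < k\<close> by (simp add: less_le_trans)
      also have "\<dots> \<le> 1 / real (Suc k)" using \<open>k \<le> K n\<close> by (simp add: frac_le)
      finally show "err n (a n) i < r" using \<open>1 / real (Suc k) < r\<close> by simp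
    qed
  qed
  then show ?thesis using a(1) by blast
qed

lemma conv_along_imp_annihilator_twist:
  fixes S :: "nat \<Rightarrow> 'g::{ab_group_add, countable} set"
  assumes S: "\<And>n. is_subgroup (S n)" and chis: "\<And>n. is_character (chis n)"
    and chi: "is_character chi" and conv: "conv_along S chis chi"
  shows "\<exists>\<nu>. (\<forall>n. \<nu> n \<in> annihilator (S n)) \<and> (\<forall>\<gamma>. (\<lambda>n. chis n \<gamma> * \<nu> n \<gamma>) \<longlonglongrightarrow> chi \<gamma>)"
proof -
  define eta where "eta n = (\<lambda>y. chi y * cnj (chis n y))" for n
  have eta: "is_character (eta n)" for n
    unfolding eta_def by (rule character_mult[OF chi character_cnj[OF chis]])
  have "norm (eta n y - 1) = norm (chis n y - chi y)" for n y
    using norm_mult_cnj_minus_1[OF norm_character[OF chis]] by (simp add: eta_def norm_minus_commute)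
  then have along: "(\<lambda>n. indicator (S n) y * norm (eta n y - 1)) \<longlonglongrightarrow> (0::real)" for y
    using conv unfolding conv_along_def by simp
  have nonempty: "annihilator (S n) \<noteq> {}" for n using annihilator_1 by blast
  obtain nu where nu: "\<And>n. nu n \<in> annihilator (S n)"
    "\<And>i r. 0 < r \<Longrightarrow> \<forall>\<^sub>F n in sequentially. norm (nu n (from_nat i) - eta n (from_nat i)) < r"
    using diagonal_selection[where err = "\<lambda>n nu i. norm (nu (from_nat i) - eta n (from_nat i))",
        OF eventually_annihilator_approximates[OF S eta along] nonempty] by blast
  have "(\<lambda>n. chis n y * nu n y) \<longlonglongrightarrow> chi y" for y
  proof -
    have twist: "norm (chis n y * nu n y - chi y) = norm (nu n y - eta n y)" for n
    proof -
      have "chis n y * cnj (chis n y) = 1" by (rule mult_cnj_eq_1[OF norm_character[OF chis]])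
      then have "chis n y * nu n y - chi y = chis n y * (nu n y - eta n y)"
        by (simp add: eta_def algebra_simps)
      then show ?thesis by (simp add: norm_mult norm_character[OF chis])
    qed
    have "(\<lambda>n. norm (nu n y - eta n y)) \<longlonglongrightarrow> 0"
    proof (rule order_tendstoI)
      show "\<forall>\<^sub>F n in sequentially. a < norm (nu n y - eta n y)" if "a < 0" for a
        using that by (intro always_eventually allI) (simp add: order_less_le_trans)
      show "\<forall>\<^sub>F n in sequentially. norm (nu n y - eta n y) < a" if "0 < a" for a
        using nu(2)[OF that, of "to_nat y"] by simp
    qed
    then have "(\<lambda>n. norm (chis n y * nu n y - chi y)) \<longlonglongrightarrow> 0" unfolding twist .
    then show ?thesis by (simp add: tendsto_norm_zero_iff LIM_zero_iff)
  qed
  then show ?thesis using nu(1) by blast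
qed

lemma annihilator_twist_imp_conv_along:
  assumes nu: "\<And>n. nu n \<in> annihilator (S n)"
    and lim: "\<And>y. (\<lambda>n. chis n y * nu n y) \<longlonglongrightarrow> chi y"
  shows "conv_along S chis chi"
  unfolding conv_along_def
proof
  fix y
  show "(\<lambda>n. indicator (S n) y * norm (chis n y - chi y)) \<longlonglongrightarrow> (0::real)"
  proof (rule Lim_null_comparison)
    have "norm (indicator (S n) y * norm (chis n y - chi y)) \<le> norm (chis n y * nu n y - chi y)" for n
    proof (cases "y \<in> S n")
      case True
      then have "nu n y = 1" using nu[of n] by (simp add: annihilator_def)
      with True show ?thesis by simp
    qed simp
    then show "\<forall>\<^sub>F n in sequentially. norm (indicator (S n) y * norm (chis n y - chi y))
        \<le> norm (chis n y * nu n y - chi y)"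
      by (intro always_eventually allI)
    show "(\<lambda>n. norm (chis n y * nu n y - chi y)) \<longlonglongrightarrow> 0"
      using lim[of y] by (simp add: tendsto_norm_zero_iff LIM_zero_iff)
  qed
qed

theorem lemma3p10:
  fixes S :: "nat \<Rightarrow> 'g::{ab_group_add, countable} set"
    and chis :: "nat \<Rightarrow> 'g \<Rightarrow> complex"
    and chi :: "'g \<Rightarrow> complex"
  assumes "\<And>n. is_subgroup (S n)"
    and "\<And>n. is_character (chis n)"
    and "is_character chi"
  shows "conv_along S chis chi \<longleftrightarrow>
    (\<exists>\<nu>. (\<forall>n. \<nu> n \<in> annihilator (S n)) \<and>
         (\<forall>\<gamma>. (\<lambda>n. chis n \<gamma> * \<nu> n \<gamma>) \<longlonglongrightarrow> chi \<gamma>))"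
proof
  assume "conv_along S chis chi"
  then show "\<exists>\<nu>. (\<forall>n. \<nu> n \<in> annihilator (S n)) \<and> (\<forall>\<gamma>. (\<lambda>n. chis n \<gamma> * \<nu> n \<gamma>) \<longlonglongrightarrow> chi \<gamma>)"
    by (rule conv_along_imp_annihilator_twist[OF assms])
next
  assume "\<exists>\<nu>. (\<forall>n. \<nu> n \<in> annihilator (S n)) \<and> (\<forall>\<gamma>. (\<lambda>n. chis n \<gamma> * \<nu> n \<gamma>) \<longlonglongrightarrow> chi \<gamma>)"
  then show "conv_along S chis chi" using annihilator_twist_imp_conv_along by blast
qed

end
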